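(* Let $(A,[\cdot,\cdot])$ and $(V,[\cdot,\cdot]_V)$ be Malcev algebras and $(V;[\cdot,\cdot]_V,\rho)$ an $A$-module Malcev algebra. Then $A\oplus V$ with the bracket $[x+a,y+b]_\rho=[x,y]+\rho(x)b-\rho(y)a+[a,b]_V$ ($x,y\in A$, $a,b\in V$) is a Malcev algebra.
   Context: Field of characteristic zero. A Malcev algebra is a vector space with an anti-symmetric bracket satisfying $J(x,y,[x,z])=[J(x,y,z),x]$, $J(x,y,z)=[[x,y],z]+[[z,x],y]+[[y,z],x]$. A representation of $(A,[\cdot,\cdot])$ on $V$ is a linear $\rho:A\to\mathrm{End}(V)$ with $\rho([[x,y],z])=\rho(x)\rho(y)\rho(z)-\rho(z)\rho(x)\rho(y)+\rho(y)\rho([z,x])-\rho([y,z])\rho(x)$. An $A$-module Malcev algebra $(V;[\cdot,\cdot]_V,\rho)$ consists of a Malcev algebra $(V,[\cdot,\cdot]_V)$ and a representation $\rho$ of $A$ on $V$ such that for all $x,y\in A$, $a,b,c\in V$: $\rho([x,y])[a,b]_V=\rho(x)[\rho(y)a,b]_V-[\rho(y)\rho(x)a,b]_V-[\rho(x)\rho(y)b,a]_V+\rho(y)[\rho(x)b,a]_V$; $[\rho(x)a,\rho(y)b]_V=[\rho([x,y])a,b]_V-\rho(x)[\rho(y)a,b]_V+\rho(y)\rho(x)[a,b]_V+[\rho(y)\rho(x)b,a]_V$; $[\rho(x)a,[b,c]_V]_V=[[\rho(x)b,a]_V,c]_V-\rho(x)[[b,a]_V,c]_V-[\rho(x)[a,c]_V,b]_V-[[\rho(x)c,b]_V,a]_V$.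 *)

theory Defs
  imports "HOL.Vector_Spaces" "HOL-Library.Product_Plus"
begin

definition bilinear_map ::
  "('k::field \<Rightarrow> 'a::ab_group_add \<Rightarrow> 'a) \<Rightarrow> ('k \<Rightarrow> 'b::ab_group_add \<Rightarrow> 'b) \<Rightarrow> ('k \<Rightarrow> 'c::ab_group_add \<Rightarrow> 'c)
    \<Rightarrow> ('a \<Rightarrow> 'b \<Rightarrow> 'c) \<Rightarrow> bool" where
  "bilinear_map s1 s2 s3 f \<longleftrightarrow>
     (\<forall>x. Vector_Spaces.linear s2 s3 (f x)) \<and> (\<forall>y. Vector_Spaces.linear s1 s3 (\<lambda>x. f x y))"

definition jacobiator :: "('a \<Rightarrow> 'a \<Rightarrow> 'a::ab_group_add) \<Rightarrow> 'a \<Rightarrow> 'a \<Rightarrow> 'a \<Rightarrow> 'a" where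
  "jacobiator br x y z = br (br x y) z + br (br z x) y + br (br y z) x"

definition malcev_algebra :: "('k::field_char_0 \<Rightarrow> 'a::ab_group_add \<Rightarrow> 'a) \<Rightarrow> ('a \<Rightarrow> 'a \<Rightarrow> 'a) \<Rightarrow> bool" where
  "malcev_algebra sc br \<longleftrightarrow>
     vector_space sc \<and> bilinear_map sc sc sc br \<and>
     (\<forall>x y. br x y = - br y x) \<and>
     (\<forall>x y z. jacobiator br x y (br x z) = br (jacobiator br x y z) x)"

definition malcev_rep ::
  "('k::field_char_0 \<Rightarrow> 'a::ab_group_add \<Rightarrow> 'a) \<Rightarrow> ('a \<Rightarrow> 'a \<Rightarrow> 'a)
    \<Rightarrow> ('k \<Rightarrow> 'v::ab_group_add \<Rightarrow> 'v) \<Rightarrow> ('a \<Rightarrow> 'v \<Rightarrow> 'v) \<Rightarrow> bool" where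
  "malcev_rep sA brA sV rho \<longleftrightarrow>
     vector_space sV \<and>
     bilinear_map sA sV sV rho \<and>
     (\<forall>x y z v. rho (brA (brA x y) z) v =
        rho x (rho y (rho z v)) - rho z (rho x (rho y v))
        + rho y (rho (brA z x) v) - rho (brA y z) (rho x v))"

definition module_malcev_algebra ::
  "('k::field_char_0 \<Rightarrow> 'a::ab_group_add \<Rightarrow> 'a) \<Rightarrow> ('a \<Rightarrow> 'a \<Rightarrow> 'a)
    \<Rightarrow> ('k \<Rightarrow> 'v::ab_group_add \<Rightarrow> 'v) \<Rightarrow> ('v \<Rightarrow> 'v \<Rightarrow> 'v) \<Rightarrow> ('a \<Rightarrow> 'v \<Rightarrow> 'v) \<Rightarrow> bool" where
  "module_malcev_algebra sA brA sV brV rho \<longleftrightarrow>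
     malcev_algebra sV brV \<and> malcev_rep sA brA sV rho \<and>
     (\<forall>x y a b.
        rho (brA x y) (brV a b) =
          rho x (brV (rho y a) b) - brV (rho y (rho x a)) b
          - brV (rho x (rho y b)) a + rho y (brV (rho x b) a)) \<and>
     (\<forall>x y a b.
        brV (rho x a) (rho y b) =
          brV (rho (brA x y) a) b - rho x (brV (rho y a) b)
          + rho y (rho x (brV a b)) + brV (rho y (rho x b)) a) \<and>
     (\<forall>x a b c.
        brV (rho x a) (brV b c) =
          brV (brV (rho x b) a) c - rho x (brV (brV b a) c)
          - brV (rho x (brV a c)) b - brV (brV (rho x c) b) a)"

definition sum_scale :: "('k \<Rightarrow> 'a \<Rightarrow> 'a) \<Rightarrow> ('k \<Rightarrow> 'v \<Rightarrow> 'v) \<Rightarrow> 'k \<Rightarrow> 'a \<times> 'v \<Rightarrow> 'a \<times> 'v" where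
  "sum_scale sA sV c p = (sA c (fst p), sV c (snd p))"

definition semidirect_bracket ::
  "('a \<Rightarrow> 'a \<Rightarrow> 'a) \<Rightarrow> ('v::ab_group_add \<Rightarrow> 'v \<Rightarrow> 'v) \<Rightarrow> ('a \<Rightarrow> 'v \<Rightarrow> 'v)
    \<Rightarrow> 'a \<times> 'v \<Rightarrow> 'a \<times> 'v \<Rightarrow> 'a \<times> 'v" where
  "semidirect_bracket brA brV rho p q =
     (brA (fst p) (fst q), rho (fst p) (snd q) - rho (fst q) (snd p) + brV (snd p) (snd q))"

end

theory Submission
  imports Defs
begin

text \<open>The Malcev defect \<open>D(p,q,r) = J(p,q,[p,r]) - [J(p,q,r),p]\<close> of any biadditive bracket is
additive in \<open>q\<close> and \<open>r\<close> and quadratic in \<open>p\<close>. Splitting every argument of the semidirect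
bracket into its \<open>A\<close>- and \<open>V\<close>-part therefore decomposes \<open>D\<close> into eight values of \<open>D\<close> on
homogeneous arguments and four values of its polarisation in \<open>p\<close> at one \<open>A\<close>- and one
\<open>V\<close>-argument. Modulo antisymmetry, each of these twelve terms is an instance of one of the
axioms: the Malcev identity of \<open>A\<close> or of \<open>V\<close>, the representation identity, or one of the three
compatibility conditions of an \<open>A\<close>-module Malcev algebra.\<close>

locale biadditive =
  fixes f :: "'a::ab_group_add \<Rightarrow> 'b::ab_group_add \<Rightarrow> 'c::ab_group_add"
  assumes add_left: "f (x + x') y = f x y + f x' y"
    and add_right: "f x (y + y') = f x y + f x y'"
begin

sublocale left: additive "\<lambda>x. f x y" for y
  by unfold_locales (rule add_left)

sublocale right: additive "f x" for x
  by unfold_locales (rule add_right)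

lemmas zero_left = left.zero and zero_right = right.zero
  and minus_left = left.minus and minus_right = right.minus
  and diff_left = left.diff and diff_right = right.diff

end

lemma biadditive_if_bilinear_map:
  assumes "bilinear_map s1 s2 s3 f"
  shows "biadditive f"
  using assms by unfold_locales (simp_all add: bilinear_map_def linear_iff)

lemma biadditive_anticomm:
  fixes br :: "'a::ab_group_add \<Rightarrow> 'a \<Rightarrow> 'b::ab_group_add"
  assumes "biadditive br" and self: "\<And>u. br u u = 0"
  shows "br x y = - br y x"
proof -
  have "br (x + y) (x + y) = br x x + br y x + (br x y + br y y)"
    by (simp only: biadditive.add_left[OF assms(1)] biadditive.add_right[OF assms(1)])
  then have "br y x + br x y = 0"
    by (simp add: self)
  then show ?thesis
    by (simp add: add_eq_0_iff)
qed

definition malcev_defect :: "('a \<Rightarrow> 'a \<Rightarrow> 'a::ab_group_add) \<Rightarrow> 'a \<Rightarrow> 'a \<Rightarrow> 'a \<Rightarrow> 'a" where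
  "malcev_defect br p q r = jacobiator br p q (br p r) - br (jacobiator br p q r) p"

definition malcev_polar :: "('a \<Rightarrow> 'a \<Rightarrow> 'a::ab_group_add) \<Rightarrow> 'a \<Rightarrow> 'a \<Rightarrow> 'a \<Rightarrow> 'a \<Rightarrow> 'a" where
  "malcev_polar br u w q r =
     jacobiator br u q (br w r) + jacobiator br w q (br u r)
     - br (jacobiator br u q r) w - br (jacobiator br w q r) u"

lemma
  assumes "biadditive br"
  shows malcev_defect_add_left:
      "malcev_defect br (u + w) q r =
         malcev_defect br u q r + malcev_defect br w q r + malcev_polar br u w q r"
    and malcev_defect_add_mid:
      "malcev_defect br p (q + q') r = malcev_defect br p q r + malcev_defect br p q' r"
    and malcev_defect_add_right:
      "malcev_defect br p q (r + r') = malcev_defect br p q r + malcev_defect br p q r'"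
    and malcev_polar_add_mid:
      "malcev_polar br u w (q + q') r = malcev_polar br u w q r + malcev_polar br u w q' r"
    and malcev_polar_add_right:
      "malcev_polar br u w q (r + r') = malcev_polar br u w q r + malcev_polar br u w q r'"
  using assms
  by (simp_all add: malcev_defect_def malcev_polar_def jacobiator_def
      biadditive.add_left biadditive.add_right algebra_simps)

locale module_malcev_identities =
  A: biadditive brA + V: biadditive brV + R: biadditive rho
  for brA :: "'a::ab_group_add \<Rightarrow> 'a \<Rightarrow> 'a"
    and brV :: "'v::ab_group_add \<Rightarrow> 'v \<Rightarrow> 'v"
    and rho :: "'a \<Rightarrow> 'v \<Rightarrow> 'v" +
  assumes brA_self: "brA x x = 0"
    and brV_self: "brV a a = 0"
    and malcev_A: "jacobiator brA x y (brA x z) = brA (jacobiator brA x y z) x"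
    and malcev_V: "jacobiator brV a b (brV a c) = brV (jacobiator brV a b c) a"
    and rho_bracket_bracket: "rho (brA (brA x y) z) a =
        rho x (rho y (rho z a)) - rho z (rho x (rho y a))
        + rho y (rho (brA z x) a) - rho (brA y z) (rho x a)"
    and rho_bracket_brV: "rho (brA x y) (brV a b) =
        rho x (brV (rho y a) b) - brV (rho y (rho x a)) b
        - brV (rho x (rho y b)) a + rho y (brV (rho x b) a)"
    and brV_rho_rho: "brV (rho x a) (rho y b) =
        brV (rho (brA x y) a) b - rho x (brV (rho y a) b)
        + rho y (rho x (brV a b)) + brV (rho y (rho x b)) a"
    and brV_rho_brV: "brV (rho x a) (brV b c) =
        brV (brV (rho x b) a) c - rho x (brV (brV b a) c)
        - brV (rho x (brV a c)) b - brV (brV (rho x c) b) a"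
begin

abbreviation bracket :: "'a \<times> 'v \<Rightarrow> 'a \<times> 'v \<Rightarrow> 'a \<times> 'v" where
  "bracket \<equiv> semidirect_bracket brA brV rho"

lemma brA_anticomm: "brA x y = - brA y x"
  using A.biadditive_axioms brA_self by (rule biadditive_anticomm)

lemma brV_anticomm: "brV a b = - brV b a"
  using V.biadditive_axioms brV_self by (rule biadditive_anticomm)

text \<open>The left-hand side of the representation identity is antisymmetric in its first two
arguments, hence so is its right-hand side; solved for one summand, this reads:\<close>

lemma rho_rho_rho_swap: "rho x (rho z (rho y a)) =
    rho y (rho x (rho z a)) + rho y (rho z (rho x a)) - rho z (rho x (rho y a))
    + rho (brA x y) (rho z a) + rho z (rho (brA x y) a)
    + rho (brA z y) (rho x a) + rho x (rho (brA z y) a)"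
proof -
  have "rho (brA (brA x z) y) a + rho (brA (brA z x) y) a = 0"
    by (simp add: brA_anticomm[of z x] A.minus_left R.minus_left)
  then show ?thesis
    unfolding rho_bracket_bracket[of x z y a] rho_bracket_bracket[of z x y a]
    by (simp add: brA_anticomm[of y x] brA_anticomm[of y z] A.minus_left
        R.minus_left R.minus_right algebra_simps)
qed

text \<open>Likewise for the third compatibility condition, antisymmetric in its last two arguments:\<close>

lemma brV_brV_rho_swap: "brV (brV (rho x b) a) c =
    brV (brV (rho x b) c) a + brV (brV (rho x c) b) a - brV (brV (rho x c) a) b
    + brV (rho x (brV a c)) b + brV (rho x (brV a b)) c
    + rho x (brV (brV b a) c) + rho x (brV (brV c a) b)"
proof -
  have "brV (rho x a) (brV b c) + brV (rho x a) (brV c b) = 0"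
    by (simp add: brV_anticomm[of c b] V.minus_right)
  then show ?thesis
    unfolding brV_rho_brV[of x a b c] brV_rho_brV[of x a c b]
    by (simp add: algebra_simps)
qed

lemma bracket_biadditive: "biadditive bracket"
  by unfold_locales
    (simp_all add: semidirect_bracket_def A.add_left A.add_right V.add_left V.add_right
      R.add_left R.add_right algebra_simps)

lemma bracket_self: "bracket p p = 0"
  by (simp add: semidirect_bracket_def brA_self brV_self zero_prod_def)

lemmas bracket_simps = semidirect_bracket_def malcev_defect_def malcev_polar_def jacobiator_def
  zero_prod_def
  A.zero_left A.zero_right V.zero_left V.zero_right R.zero_left R.zero_right
  A.minus_left A.minus_right V.minus_left V.minus_right R.minus_left R.minus_right
  A.add_left A.add_right V.add_left V.add_right R.add_left R.add_right
  A.diff_left A.diff_right V.diff_left V.diff_right R.diff_left R.diff_right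

text \<open>The letters \<open>A\<close> and \<open>V\<close> in a name record which summand each
argument lies in; for \<open>malcev_polar\<close> the first pair of letters refers to the two parts of \<open>p\<close>.\<close>

lemma defect_AAA: "malcev_defect bracket (x, 0) (y, 0) (z, 0) = 0"
  using malcev_A[of x y z] by (simp add: bracket_simps)

lemma defect_AAV: "malcev_defect bracket (x, 0) (y, 0) (0, c) = 0"
  using rho_bracket_bracket[of x x y c]
  by (simp add: bracket_simps brA_self brA_anticomm[of y x] algebra_simps)

lemma defect_AVA: "malcev_defect bracket (x, 0) (0, b) (z, 0) = 0"
  using rho_bracket_bracket[of x z x b]
  by (simp add: bracket_simps brA_self brA_anticomm[of z x] algebra_simps)

lemma defect_AVV: "malcev_defect bracket (x, 0) (0, b) (0, c) = 0"
  using brV_rho_rho[of x b x c]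
  by (simp add: bracket_simps brA_self brV_anticomm[of b "rho x c"] algebra_simps)

lemma defect_VAA: "malcev_defect bracket (0, a) (y, 0) (z, 0) = 0"
  using brV_rho_rho[of y a z a] by (simp add: bracket_simps brV_self algebra_simps)

lemma defect_VAV: "malcev_defect bracket (0, a) (y, 0) (0, c) = 0"
  using brV_rho_brV[of y a c a]
  by (simp add: bracket_simps brV_self brV_anticomm[of c a] algebra_simps)

lemma defect_VVA: "malcev_defect bracket (0, a) (0, b) (z, 0) = 0"
  using brV_rho_brV[of z a a b]
  by (simp add: bracket_simps brV_self brV_anticomm[of "brV a b" "rho z a"]
      brV_anticomm[of b "rho z a"] algebra_simps)

lemma defect_VVV: "malcev_defect bracket (0, a) (0, b) (0, c) = 0"
  using malcev_V[of a b c] by (simp add: bracket_simps)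

lemma polar_AV_AA: "malcev_polar bracket (x, 0) (0, a) (y, 0) (z, 0) = 0"
  by (simp add: bracket_simps rho_bracket_bracket[of x y z a] rho_bracket_bracket[of y z x a]
      rho_rho_rho_swap[of x z y a] brA_anticomm[of z x] brA_anticomm[of y "brA x z"]
      brA_anticomm[of z y] algebra_simps)

lemma polar_AV_AV: "malcev_polar bracket (x, 0) (0, a) (y, 0) (0, c) = 0"
  by (simp add: bracket_simps rho_bracket_brV[of x y a c] brV_rho_rho[of x c y a]
      brV_anticomm[of "rho y a" "rho x c"] brV_anticomm[of c a] algebra_simps)

lemma polar_AV_VA: "malcev_polar bracket (x, 0) (0, a) (0, b) (z, 0) = 0"
  by (simp add: bracket_simps brV_rho_rho[of z a x b] rho_bracket_brV[of x z b a]
      brA_anticomm[of z x] brV_anticomm[of a b] brV_anticomm[of "rho x b" "rho z a"]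
      brV_anticomm[of b "rho z a"] algebra_simps)

lemma polar_AV_VV: "malcev_polar bracket (x, 0) (0, a) (0, b) (0, c) = 0"
  by (simp add: bracket_simps brV_rho_brV[of x b c a] brV_rho_brV[of x c a b]
      brV_brV_rho_swap[of x b a c] brV_anticomm[of c b] brV_anticomm[of a c]
      brV_anticomm[of b a] brV_anticomm[of "brV a b" "rho x c"] brV_anticomm[of b "rho x c"]
      brV_anticomm[of b "brV c a"] algebra_simps)

theorem malcev_defect_bracket: "malcev_defect bracket p q r = 0"
proof -
  have "malcev_defect bracket p q r =
      malcev_defect bracket ((fst p, 0) + (0, snd p)) ((fst q, 0) + (0, snd q)) ((fst r, 0) + (0, snd r))"
    by simp
  also have "\<dots> = 0"
    by (simp only: malcev_defect_add_left malcev_defect_add_mid malcev_defect_add_right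
        malcev_polar_add_mid malcev_polar_add_right bracket_biadditive
        defect_AAA defect_AAV defect_AVA defect_AVV defect_VAA defect_VAV defect_VVA defect_VVV
        polar_AV_AA polar_AV_AV polar_AV_VA polar_AV_VV add_0_right)
  finally show ?thesis .
qed

end

lemma vector_space_eq_neg_imp_zero:
  fixes scale :: "'k::field_char_0 \<Rightarrow> 'b::ab_group_add \<Rightarrow> 'b"
    and v :: 'b
  assumes "vector_space scale" and "v = - v"
  shows "v = 0"
proof -
  have m: "module scale"
    using assms(1) by (simp add: module_iff_vector_space)
  have "v = scale (1/2 + 1/2) v"
    by (simp add: module.scale_one[OF m])
  also have "\<dots> = scale (1/2) (v + v)"
    by (simp only: module.scale_left_distrib[OF m] module.scale_right_distrib[OF m])
  also have "v + v = 0"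
    using assms(2) by (metis add.right_inverse)
  finally show ?thesis
    by (simp add: module.scale_zero_right[OF m])
qed

lemma vector_space_sum_scale:
  assumes "vector_space sA" and "vector_space sV"
  shows "vector_space (sum_scale sA sV)"
  using assms unfolding vector_space_def sum_scale_def
  by (auto simp: prod_eq_iff)

lemma bilinear_map_semidirect_bracket:
  fixes sA :: "'k::field \<Rightarrow> 'a::ab_group_add \<Rightarrow> 'a" and sV :: "'k \<Rightarrow> 'v::ab_group_add \<Rightarrow> 'v"
  assumes "vector_space sA" and "vector_space sV"
    and A: "bilinear_map sA sA sA brA" and V: "bilinear_map sV sV sV brV"
    and R: "bilinear_map sA sV sV rho"
  shows "bilinear_map (sum_scale sA sV) (sum_scale sA sV) (sum_scale sA sV)
           (semidirect_bracket brA brV rho)"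
proof -
  have m: "module sV"
    using assms(2) by (simp add: module_iff_vector_space)
  have scale:
      "brA (sA c x) y = sA c (brA x y)" "brA x (sA c y) = sA c (brA x y)"
      "brV (sV c a) b = sV c (brV a b)" "brV a (sV c b) = sV c (brV a b)"
      "rho (sA c x) a = sV c (rho x a)" "rho x (sV c a) = sV c (rho x a)" for c x y a b
    using A V R by (simp_all add: bilinear_map_def linear_iff)
  have "vector_space (sum_scale sA sV)"
    using assms(1,2) by (rule vector_space_sum_scale)
  then show ?thesis
    unfolding bilinear_map_def linear_iff
    using biadditive_if_bilinear_map[OF A] biadditive_if_bilinear_map[OF V]
      biadditive_if_bilinear_map[OF R]
    by (simp add: semidirect_bracket_def sum_scale_def scale biadditive.add_left
        biadditive.add_right module.scale_right_distrib[OF m]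
        module.scale_right_diff_distrib[OF m] algebra_simps)
qed

lemma module_malcev_identities_if_module_malcev_algebra:
  fixes sA :: "'k::field_char_0 \<Rightarrow> 'a::ab_group_add \<Rightarrow> 'a"
  assumes A: "malcev_algebra sA brA" and M: "module_malcev_algebra sA brA sV brV rho"
  shows "module_malcev_identities brA brV rho"
proof -
  have alternating: "br u u = 0" if "malcev_algebra scale br" for scale br u
  proof (rule vector_space_eq_neg_imp_zero)
    show "vector_space scale" and "br u u = - br u u"
      using that unfolding malcev_algebra_def by blast+
  qed
  have V: "malcev_algebra sV brV" and R: "malcev_rep sA brA sV rho"
    using M unfolding module_malcev_algebra_def by blast+
  have "biadditive brA" "biadditive brV" "biadditive rho"
    using A V R unfolding malcev_algebra_def malcev_rep_def by (blast intro: biadditive_if_bilinear_map)+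
  then show ?thesis
  proof (intro module_malcev_identities.intro module_malcev_identities_axioms.intro)
    show "brA x x = 0" for x
      using A by (rule alternating)
    show "brV a a = 0" for a
      using V by (rule alternating)
    show "jacobiator brA x y (brA x z) = brA (jacobiator brA x y z) x" for x y z
      using A unfolding malcev_algebra_def by blast
    show "jacobiator brV a b (brV a c) = brV (jacobiator brV a b c) a" for a b c
      using V unfolding malcev_algebra_def by blast
  qed (use M in \<open>simp_all add: module_malcev_algebra_def malcev_rep_def\<close>)
qed

theorem proposition4p2:
  fixes sA :: "'k::field_char_0 \<Rightarrow> 'a::ab_group_add \<Rightarrow> 'a"
    and sV :: "'k \<Rightarrow> 'v::ab_group_add \<Rightarrow> 'v"
    and brA :: "'a \<Rightarrow> 'a \<Rightarrow> 'a" and brV :: "'v \<Rightarrow> 'v \<Rightarrow> 'v"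
    and rho :: "'a \<Rightarrow> 'v \<Rightarrow> 'v"
  assumes "malcev_algebra sA brA"
    and "malcev_algebra sV brV"
    and "module_malcev_algebra sA brA sV brV rho"
  shows "malcev_algebra (sum_scale sA sV) (semidirect_bracket brA brV rho)"
proof -
  interpret module_malcev_identities brA brV rho
    using assms(1,3) by (rule module_malcev_identities_if_module_malcev_algebra)
  have "vector_space sA" "bilinear_map sA sA sA brA" "vector_space sV" "bilinear_map sV sV sV brV"
    using assms(1,2) unfolding malcev_algebra_def by blast+
  moreover have "bilinear_map sA sV sV rho"
    using assms(3) unfolding module_malcev_algebra_def malcev_rep_def by blast
  ultimately show ?thesis
    unfolding malcev_algebra_def
  proof (intro conjI allI vector_space_sum_scale bilinear_map_semidirect_bracket)
    show "bracket p q = - bracket q p" for p q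
      using bracket_biadditive bracket_self by (rule biadditive_anticomm)
    show "jacobiator bracket p q (bracket p r) = bracket (jacobiator bracket p q r) p" for p q r
      using malcev_defect_bracket[of p q r] by (simp add: malcev_defect_def)
  qed
qed

end
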